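(* Let $\Omega\subset\mathbb{R}^2$ be a bounded domain, and let $S_1,S_2\subset\Omega$. Let $u\in C^{0}(\bar\Omega\setminus S_1)$, $v\in C^0(\bar\Omega\setminus S_2)$, let $S(u)\subset\Omega\setminus S_1$ (resp. $S(v)\subset\Omega\setminus S_2$) be the set of points where $u_x-y=0=u_y+x$ (resp. $v_x-y=0=v_y+x$), and let $S=S_1\cup S_2\cup S(u)\cup S(v)$. Assume $u,v\in C^2(\Omega\setminus S)$ and $\mathcal{H}_1(\bar S)=0$, where $\mathcal H_1$ is the 1-dimensional Hausdorff measure. For $w\in\{u,v\}$ put $N(w)=(w_x-y,w_y+x)/\sqrt{(w_x-y)^2+(w_y+x)^2}$ on $\Omega\setminus S$. Suppose $\operatorname{div}N(u)\ge\operatorname{div}N(v)$ in $\Omega\setminus S$ and $u\le v$ on $\partial\Omega\setminus S$. Then $N(u)=N(v)$ in $\Omega^+\setminus S$, where $\Omega^+=\{p\in\Omega: u(p)-v(p)>0\}$.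
   Context: $\operatorname{div}$ is the Euclidean divergence in the plane. *)

theory Defs
  imports "HOL-Analysis.Analysis"
begin

definition px :: "(real * real \<Rightarrow> real) \<Rightarrow> real * real \<Rightarrow> real" where
  "px f p = frechet_derivative f (at p) (1, 0)"

definition py :: "(real * real \<Rightarrow> real) \<Rightarrow> real * real \<Rightarrow> real" where
  "py f p = frechet_derivative f (at p) (0, 1)"

definition C2_on :: "(real * real) set \<Rightarrow> (real * real \<Rightarrow> real) \<Rightarrow> bool" where
  "C2_on A f \<longleftrightarrow>
     (\<forall>p\<in>A. f differentiable (at p) \<and> px f differentiable (at p) \<and> py f differentiable (at p)) \<and>
     continuous_on A (px (px f)) \<and> continuous_on A (py (px f)) \<and>
     continuous_on A (px (py f)) \<and> continuous_on A (py (py f))"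

definition sing_set :: "(real * real) set \<Rightarrow> (real * real) set \<Rightarrow> (real * real \<Rightarrow> real) \<Rightarrow> (real * real) set" where
  "sing_set \<Omega> S1 u = {p \<in> \<Omega> - S1. u differentiable (at p) \<and>
      px u p - snd p = 0 \<and> py u p + fst p = 0}"

definition Nfield :: "(real * real \<Rightarrow> real) \<Rightarrow> real * real \<Rightarrow> real * real" where
  "Nfield w p = (let P = px w p - snd p; Q = py w p + fst p; r = sqrt (P\<^sup>2 + Q\<^sup>2)
                 in (P / r, Q / r))"

definition div2 :: "(real * real \<Rightarrow> real * real) \<Rightarrow> real * real \<Rightarrow> real" where
  "div2 F p = px (\<lambda>q. fst (F q)) p + py (\<lambda>q. snd (F q)) p"

definition hausdorff1_delta :: "real \<Rightarrow> (real * real) set \<Rightarrow> ennreal" where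
  "hausdorff1_delta \<delta> E =
     (INF C \<in> {C :: nat \<Rightarrow> (real * real) set. E \<subseteq> (\<Union>n. C n) \<and>
                 (\<forall>n. bounded (C n) \<and> diameter (C n) \<le> \<delta>)}.
        (\<Sum>n. ennreal (diameter (C n))))"

definition hausdorff1 :: "(real * real) set \<Rightarrow> ennreal" where
  "hausdorff1 E = (SUP \<delta> \<in> {0<..}. hausdorff1_delta \<delta> E)"

end

theory Submission
  imports Defs
begin

section \<open>Partial derivatives and C1 functions in the plane\<close>

definition grad :: "(real * real \<Rightarrow> real) \<Rightarrow> real * real \<Rightarrow> real * real" where
  "grad f p = (px f p, py f p)"

lemma frechet_derivative_eq_grad:
  assumes "f differentiable (at p)"
  shows "frechet_derivative f (at p) e = inner e (grad f p)"
proof -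
  have lin: "linear (frechet_derivative f (at p))"
    using assms by (rule linear_frechet_derivative)
  have "frechet_derivative f (at p) (a *\<^sub>R x + b *\<^sub>R y)
      = a * frechet_derivative f (at p) x + b * frechet_derivative f (at p) y" for a b x y
    by (simp add: linear_add[OF lin] linear_scale[OF lin])
  from this[of "fst e" "(1, 0)" "snd e" "(0, 1)"] show ?thesis
    by (cases e) (simp add: grad_def px_def py_def)
qed

lemma grad_has_derivative:
  "(f has_derivative f') (at p) \<Longrightarrow> grad f p = (f' (1, 0), f' (0, 1))"
  by (simp add: grad_def px_def py_def frechet_derivative_at[symmetric])

lemma grad_const: "grad (\<lambda>q. c) p = 0"
  by (simp add: grad_def px_def py_def zero_prod_def)

lemma grad_mult:
  assumes "f differentiable (at p)" "g differentiable (at p)"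
  shows "grad (\<lambda>q. f q * g q) p = g p *\<^sub>R grad f p + f p *\<^sub>R grad g p"
  using grad_has_derivative[OF has_derivative_mult[OF assms[unfolded frechet_derivative_works]]]
  by (simp add: grad_def px_def py_def)

lemma grad_diff:
  assumes "f differentiable (at p)" "g differentiable (at p)"
  shows "grad (\<lambda>q. f q - g q) p = grad f p - grad g p"
  using grad_has_derivative[OF has_derivative_diff[OF assms[unfolded frechet_derivative_works]]]
  by (simp add: grad_def px_def py_def)

lemma grad_compose:
  assumes "(k has_real_derivative k') (at (f p))" "f differentiable (at p)"
  shows "grad (\<lambda>q. k (f q)) p = k' *\<^sub>R grad f p"
  using grad_has_derivative[OF DERIV_compose_FDERIV[OF assms(1) assms(2)[unfolded frechet_derivative_works]]]
  by (simp add: grad_def px_def py_def)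

lemma frechet_derivative_cong_open:
  assumes "open T" "p \<in> T" "\<And>q. q \<in> T \<Longrightarrow> f q = g q"
  shows "frechet_derivative f (at p) = frechet_derivative g (at p)"
proof -
  have "(f has_derivative D) (at p) \<longleftrightarrow> (g has_derivative D) (at p)" for D
    using assms has_derivative_transform_within_open[of f D p UNIV T g]
      has_derivative_transform_within_open[of g D p UNIV T f] by auto
  then show ?thesis
    unfolding frechet_derivative_def by simp
qed

definition C1_on :: "(real * real) set \<Rightarrow> (real * real \<Rightarrow> real) \<Rightarrow> bool" where
  "C1_on A f \<longleftrightarrow> (\<forall>p\<in>A. f differentiable (at p)) \<and> continuous_on A (grad f)"

lemma C1_on_differentiable: "C1_on A f \<Longrightarrow> p \<in> A \<Longrightarrow> f differentiable (at p)"
  by (simp add: C1_on_def)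

lemma C1_on_has_derivative:
  "C1_on A f \<Longrightarrow> p \<in> A \<Longrightarrow> (f has_derivative frechet_derivative f (at p)) (at p)"
  by (simp add: C1_on_def frechet_derivative_works[symmetric])

lemma C1_on_continuous_on_grad: "C1_on A f \<Longrightarrow> continuous_on A (grad f)"
  by (simp add: C1_on_def)

lemma C1_on_continuous_on_partials:
  assumes "C1_on A f"
  shows "continuous_on A (px f)" "continuous_on A (py f)"
  using continuous_on_fst[OF C1_on_continuous_on_grad[OF assms]]
    continuous_on_snd[OF C1_on_continuous_on_grad[OF assms]]
  by (simp_all add: grad_def)

lemma C1_on_imp_continuous_on: "C1_on A f \<Longrightarrow> continuous_on A f"
  unfolding C1_on_def
  by (meson continuous_at_imp_continuous_on differentiable_imp_continuous_within)

lemma continuous_on_frechet_derivative: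
  assumes "C1_on A f"
  shows "continuous_on A (\<lambda>p. frechet_derivative f (at p) e)"
proof -
  have "continuous_on A (\<lambda>p. inner e (grad f p))"
    using C1_on_continuous_on_grad[OF assms] by (intro continuous_intros)
  then show ?thesis
    by (rule continuous_on_eq) (simp add: frechet_derivative_eq_grad C1_on_differentiable[OF assms])
qed

lemma C1_onI:
  assumes "\<And>p. p \<in> A \<Longrightarrow> (f has_derivative f' p) (at p)"
    and "\<And>e. continuous_on A (\<lambda>p. f' p e)"
  shows "C1_on A f"
  unfolding C1_on_def
proof
  show "\<forall>p\<in>A. f differentiable (at p)"
    using assms(1) by (auto simp: differentiable_def)
  have "continuous_on A (\<lambda>p. (f' p (1, 0), f' p (0, 1)))"
    using assms(2) by (intro continuous_intros)
  then show "continuous_on A (grad f)"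
    by (rule continuous_on_eq) (simp add: grad_has_derivative[OF assms(1)])
qed

lemma C1_on_subset: "C1_on A f \<Longrightarrow> B \<subseteq> A \<Longrightarrow> C1_on B f"
  unfolding C1_on_def by (auto intro: continuous_on_subset)

lemma C1_on_cong:
  assumes "C1_on A f" "open A" "\<And>p. p \<in> A \<Longrightarrow> f p = g p"
  shows "C1_on A g"
proof (rule C1_onI)
  fix p assume "p \<in> A"
  then show "(g has_derivative frechet_derivative f (at p)) (at p)"
    using assms C1_on_has_derivative[OF assms(1)] by (blast intro: has_derivative_transform_within_open)
qed (rule continuous_on_frechet_derivative[OF assms(1)])

lemma C1_on_open_Un:
  "open A \<Longrightarrow> open B \<Longrightarrow> C1_on A f \<Longrightarrow> C1_on B f \<Longrightarrow> C1_on (A \<union> B) f"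
  unfolding C1_on_def by (auto intro: continuous_on_open_Un)

lemma C1_on_const: "C1_on A (\<lambda>p. c)"
  by (rule C1_onI[where f'="\<lambda>p e. 0"]) auto

lemma C1_on_fst: "C1_on A fst"
  by (rule C1_onI[where f'="\<lambda>p. fst"]) (auto intro: has_derivative_fst[OF has_derivative_ident])

lemma C1_on_snd: "C1_on A snd"
  by (rule C1_onI[where f'="\<lambda>p. snd"]) (auto intro: has_derivative_snd[OF has_derivative_ident])

lemma C1_on_extend_by_zero:
  assumes "open V" "C1_on V f"
    and "\<And>q. q \<notin> V \<Longrightarrow> \<exists>T. open T \<and> q \<in> T \<and> (\<forall>y\<in>T \<inter> V. f y = 0)"
  shows "C1_on UNIV (\<lambda>q. if q \<in> V then f q else 0)"
proof -
  define Z where "Z = \<Union>{T. open T \<and> (\<forall>y\<in>T \<inter> V. f y = 0)}"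
  have "C1_on V (\<lambda>q. if q \<in> V then f q else 0)"
    by (rule C1_on_cong[OF assms(2,1)]) simp
  moreover have "C1_on Z (\<lambda>q. if q \<in> V then f q else 0)"
    by (rule C1_on_cong[OF C1_on_const]) (auto simp: Z_def)
  moreover have "V \<union> Z = UNIV"
    using assms(3) by (auto simp: Z_def)
  ultimately show ?thesis
    using C1_on_open_Un[OF assms(1), of Z] by (auto simp: Z_def)
qed

lemma C1_on_add:
  assumes "C1_on A f" "C1_on A g"
  shows "C1_on A (\<lambda>p. f p + g p)"
proof (rule C1_onI)
  fix p assume "p \<in> A"
  then show "((\<lambda>p. f p + g p) has_derivative
      (\<lambda>e. frechet_derivative f (at p) e + frechet_derivative g (at p) e)) (at p)"
    using assms by (intro has_derivative_add C1_on_has_derivative)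
qed (intro continuous_intros continuous_on_frechet_derivative assms)

lemma C1_on_diff:
  assumes "C1_on A f" "C1_on A g"
  shows "C1_on A (\<lambda>p. f p - g p)"
proof (rule C1_onI)
  fix p assume "p \<in> A"
  then show "((\<lambda>p. f p - g p) has_derivative
      (\<lambda>e. frechet_derivative f (at p) e - frechet_derivative g (at p) e)) (at p)"
    using assms by (intro has_derivative_diff C1_on_has_derivative)
qed (intro continuous_intros continuous_on_frechet_derivative assms)

lemma C1_on_mult:
  assumes "C1_on A f" "C1_on A g"
  shows "C1_on A (\<lambda>p. f p * g p)"
proof (rule C1_onI)
  fix p assume "p \<in> A"
  then show "((\<lambda>p. f p * g p) has_derivative
      (\<lambda>e. f p * frechet_derivative g (at p) e + frechet_derivative f (at p) e * g p)) (at p)"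
    using assms by (intro has_derivative_mult C1_on_has_derivative)
qed (intro continuous_intros continuous_on_frechet_derivative C1_on_imp_continuous_on assms)

lemma C1_on_prod:
  assumes "finite F" "\<And>i. i \<in> F \<Longrightarrow> C1_on A (f i)"
  shows "C1_on A (\<lambda>q. \<Prod>i\<in>F. f i q)"
  using assms by (induction F rule: finite_induct) (auto intro: C1_on_mult C1_on_const)

lemma C1_on_divide:
  assumes "C1_on A f" "C1_on A g" "\<And>p. p \<in> A \<Longrightarrow> g p \<noteq> 0"
  shows "C1_on A (\<lambda>p. f p / g p)"
proof (rule C1_onI)
  fix p assume "p \<in> A"
  then show "((\<lambda>p. f p / g p) has_derivative (\<lambda>e. (frechet_derivative f (at p) e * g p
      - f p * frechet_derivative g (at p) e) / (g p * g p))) (at p)"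
    using assms by (intro has_derivative_divide' C1_on_has_derivative) auto
qed (intro continuous_intros continuous_on_frechet_derivative C1_on_imp_continuous_on assms; simp add: assms)

lemma C1_on_compose:
  assumes "C1_on A f" "\<And>p. p \<in> A \<Longrightarrow> (k has_real_derivative k' (f p)) (at (f p))"
    and "continuous_on (f ` A) k'"
  shows "C1_on A (\<lambda>p. k (f p))"
proof (rule C1_onI)
  fix p assume "p \<in> A"
  then show "((\<lambda>p. k (f p)) has_derivative (\<lambda>e. frechet_derivative f (at p) e * k' (f p))) (at p)"
    using assms by (intro DERIV_compose_FDERIV C1_on_has_derivative) auto
next
  have "continuous_on A (\<lambda>p. k' (f p))"
    using assms(3) C1_on_imp_continuous_on[OF assms(1)] by (rule continuous_on_compose2) auto
  then show "continuous_on A (\<lambda>p. frechet_derivative f (at p) e * k' (f p))" for e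
    using assms(1) by (intro continuous_intros continuous_on_frechet_derivative)
qed

lemma C1_on_sqrt:
  assumes "C1_on A f" "\<And>p. p \<in> A \<Longrightarrow> f p > 0"
  shows "C1_on A (\<lambda>p. sqrt (f p))"
proof (rule C1_on_compose[OF assms(1)])
  show "(sqrt has_real_derivative inverse (sqrt (f p)) / 2) (at (f p))" if "p \<in> A" for p
    using assms(2)[OF that] by (rule DERIV_real_sqrt)
  show "continuous_on (f ` A) (\<lambda>x. inverse (sqrt x) / 2)"
    using assms(2) by (intro continuous_intros) (auto simp: less_imp_neq[symmetric])
qed

lemma C2_on_imp_C1_on:
  assumes "C2_on A w"
  shows "C1_on A w" "C1_on A (px w)" "C1_on A (py w)"
proof -
  have diff: "w differentiable (at p)" "px w differentiable (at p)" "py w differentiable (at p)"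
    if "p \<in> A" for p
    using assms that by (auto simp: C2_on_def)
  then have "continuous_on A (px w)" "continuous_on A (py w)"
    by (auto intro!: continuous_at_imp_continuous_on differentiable_imp_continuous_within)
  then show "C1_on A w"
    using diff by (auto simp: C1_on_def grad_def[abs_def] intro: continuous_on_Pair)
  show "C1_on A (px w)" "C1_on A (py w)"
    using assms diff by (auto simp: C1_on_def C2_on_def grad_def[abs_def] intro: continuous_on_Pair)
qed

lemma norm_grad_prod_le:
  assumes "finite F" "\<And>i. i \<in> F \<Longrightarrow> C1_on A (f i)" "p \<in> A" "\<And>i q. i \<in> F \<Longrightarrow> \<bar>f i q\<bar> \<le> 1"
  shows "norm (grad (\<lambda>q. \<Prod>i\<in>F. f i q) p) \<le> (\<Sum>i\<in>F. norm (grad (f i) p))"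
  using assms(1,2,4)
proof (induction F rule: finite_induct)
  case (insert i F)
  let ?P = "\<lambda>q. \<Prod>j\<in>F. f j q"
  have "\<bar>?P p\<bar> \<le> 1"
    unfolding abs_prod by (rule prod_le_1) (simp add: insert.prems(2))
  then have "\<bar>?P p\<bar> * norm (grad (f i) p) \<le> norm (grad (f i) p)"
    by (intro mult_left_le_one_le) auto
  moreover have "\<bar>f i p\<bar> * norm (grad ?P p) \<le> norm (grad ?P p)"
    using insert.prems(2)[of i] by (intro mult_left_le_one_le) auto
  moreover have "f i differentiable (at p)"
    using C1_on_differentiable[OF insert.prems(1)[of i] assms(3)] by simp
  moreover have "?P differentiable (at p)"
    by (rule C1_on_differentiable[OF C1_on_prod[OF insert.hyps(1)] assms(3)]) (use insert.prems(1) in auto)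
  ultimately have "norm (grad (\<lambda>q. f i q * ?P q) p) \<le> norm (grad (f i) p) + norm (grad ?P p)"
    using norm_triangle_ineq[of "?P p *\<^sub>R grad (f i) p" "f i p *\<^sub>R grad ?P p"]
    by (simp add: grad_mult)
  also have "\<dots> \<le> norm (grad (f i) p) + (\<Sum>j\<in>F. norm (grad (f j) p))"
    using insert by simp
  finally show ?case
    using insert.hyps by simp
qed (simp add: grad_def px_def py_def)

section \<open>Divergence\<close>

lemma div2_eq_grad: "div2 F p = fst (grad (\<lambda>q. fst (F q)) p) + snd (grad (\<lambda>q. snd (F q)) p)"
  by (simp add: div2_def grad_def)

lemma div2_scaleR:
  assumes "h differentiable (at p)"
    and "(\<lambda>q. fst (F q)) differentiable (at p)" "(\<lambda>q. snd (F q)) differentiable (at p)"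
  shows "div2 (\<lambda>q. h q *\<^sub>R F q) p = inner (grad h p) (F p) + h p * div2 F p"
  using grad_mult[OF assms(1,2)] grad_mult[OF assms(1,3)]
  by (simp add: div2_eq_grad inner_prod_def algebra_simps)

lemma div2_diff:
  assumes "(\<lambda>q. fst (F q)) differentiable (at p)" "(\<lambda>q. snd (F q)) differentiable (at p)"
    and "(\<lambda>q. fst (G q)) differentiable (at p)" "(\<lambda>q. snd (G q)) differentiable (at p)"
  shows "div2 (\<lambda>q. F q - G q) p = div2 F p - div2 G p"
  using grad_diff[OF assms(1,3)] grad_diff[OF assms(2,4)]
  by (simp add: div2_eq_grad)

lemma div2_cong_open:
  assumes "open T" "p \<in> T" "\<And>q. q \<in> T \<Longrightarrow> F q = G q"
  shows "div2 F p = div2 G p"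
  unfolding div2_def px_def py_def
  using frechet_derivative_cong_open[OF assms(1,2), of "\<lambda>q. fst (F q)" "\<lambda>q. fst (G q)"]
    frechet_derivative_cong_open[OF assms(1,2), of "\<lambda>q. snd (F q)" "\<lambda>q. snd (G q)"] assms(3)
  by simp

lemma continuous_on_div2:
  assumes "C1_on A (\<lambda>q. fst (F q))" "C1_on A (\<lambda>q. snd (F q))"
  shows "continuous_on A (div2 F)"
  unfolding div2_def[abs_def]
  using C1_on_continuous_on_partials[OF assms(1)] C1_on_continuous_on_partials[OF assms(2)]
  by (intro continuous_intros)

lemma has_real_derivative_px:
  assumes "f differentiable (at (x, y))"
  shows "((\<lambda>t. f (t, y)) has_real_derivative px f (x, y)) (at x)"
proof -
  have "((\<lambda>t. (t, y)) has_derivative (\<lambda>h. (h, 0))) (at x)"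
    by (intro derivative_eq_intros) auto
  from has_derivative_compose[OF this assms[unfolded frechet_derivative_works]]
  have "((\<lambda>t. f (t, y)) has_derivative (\<lambda>h. px f (x, y) * h)) (at x)"
    by (rule has_derivative_eq_rhs) (auto simp: fun_eq_iff frechet_derivative_eq_grad[OF assms] grad_def)
  then show ?thesis
    by (simp add: has_field_derivative_def)
qed

lemma has_real_derivative_py:
  assumes "f differentiable (at (x, y))"
  shows "((\<lambda>t. f (x, t)) has_real_derivative py f (x, y)) (at y)"
proof -
  have "((\<lambda>t. (x, t)) has_derivative (\<lambda>h. (0, h))) (at y)"
    by (intro derivative_eq_intros) auto
  from has_derivative_compose[OF this assms[unfolded frechet_derivative_works]]
  have "((\<lambda>t. f (x, t)) has_derivative (\<lambda>h. py f (x, y) * h)) (at y)"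
    by (rule has_derivative_eq_rhs) (auto simp: fun_eq_iff frechet_derivative_eq_grad[OF assms] grad_def)
  then show ?thesis
    by (simp add: has_field_derivative_def)
qed

lemma integral_derivative_eq_0:
  fixes k :: "real \<Rightarrow> real"
  assumes "\<And>t. (k has_real_derivative k' t) (at t)" "k a = 0" "k b = 0"
  shows "integral {a..b} k' = 0"
proof (cases "a \<le> b")
  case True
  have "(k' has_integral (k b - k a)) {a..b}"
    using True assms(1) by (intro fundamental_theorem_of_calculus)
      (auto simp: has_real_derivative_iff_has_vector_derivative[symmetric] intro: has_field_derivative_at_within)
  then show ?thesis
    using assms(2,3) by (simp add: integral_unique)
qed simp

lemma integral_px_eq_0:
  assumes "C1_on UNIV f" "\<And>q. q \<notin> box a b \<Longrightarrow> f q = 0"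
  shows "integral (cbox a b) (px f) = 0"
proof -
  obtain a1 a2 b1 b2 where ab: "a = (a1, a2)" "b = (b1, b2)"
    by fastforce
  have cont: "continuous_on (cbox (a1, a2) (b1, b2)) (px f)"
    using C1_on_continuous_on_partials[OF assms(1)] by (auto intro: continuous_on_subset)
  have "integral (cbox a b) (px f) = integral {a1..b1} (\<lambda>x. integral {a2..b2} (\<lambda>y. px f (x, y)))"
    unfolding ab using integral_prod_continuous[OF cont] by simp
  also have "\<dots> = integral {a2..b2} (\<lambda>y. integral {a1..b1} (\<lambda>x. px f (x, y)))"
    using integral_swap_continuous[where f="\<lambda>x y. px f (x, y)"] cont by (simp add: case_prod_beta')
  also have "\<dots> = 0"
  proof -
    have "integral {a1..b1} (\<lambda>x. px f (x, y)) = 0" for y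
      using assms by (intro integral_derivative_eq_0[where k="\<lambda>x. f (x, y)"] has_real_derivative_px)
        (auto simp: C1_on_differentiable ab mem_box Basis_prod_def)
    then show ?thesis by simp
  qed
  finally show ?thesis .
qed

lemma integral_py_eq_0:
  assumes "C1_on UNIV f" "\<And>q. q \<notin> box a b \<Longrightarrow> f q = 0"
  shows "integral (cbox a b) (py f) = 0"
proof -
  obtain a1 a2 b1 b2 where ab: "a = (a1, a2)" "b = (b1, b2)"
    by fastforce
  have cont: "continuous_on (cbox (a1, a2) (b1, b2)) (py f)"
    using C1_on_continuous_on_partials[OF assms(1)] by (auto intro: continuous_on_subset)
  have "integral (cbox a b) (py f) = integral {a1..b1} (\<lambda>x. integral {a2..b2} (\<lambda>y. py f (x, y)))"
    unfolding ab using integral_prod_continuous[OF cont] by simp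
  also have "\<dots> = 0"
  proof -
    have "integral {a2..b2} (\<lambda>y. py f (x, y)) = 0" for x
      using assms by (intro integral_derivative_eq_0[where k="\<lambda>y. f (x, y)"] has_real_derivative_py)
        (auto simp: C1_on_differentiable ab mem_box Basis_prod_def)
    then show ?thesis by simp
  qed
  finally show ?thesis .
qed

lemma integral_div2_eq_0:
  assumes "C1_on UNIV (\<lambda>q. fst (G q))" "C1_on UNIV (\<lambda>q. snd (G q))"
    and "\<And>q. q \<notin> box a b \<Longrightarrow> G q = 0"
  shows "integral (cbox a b) (div2 G) = 0"
proof -
  have int: "px (\<lambda>q. fst (G q)) integrable_on cbox a b" "py (\<lambda>q. snd (G q)) integrable_on cbox a b"
    using C1_on_continuous_on_partials[OF assms(1)] C1_on_continuous_on_partials[OF assms(2)]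
    by (auto intro!: integrable_continuous intro: continuous_on_subset)
  have "integral (cbox a b) (div2 G)
      = integral (cbox a b) (px (\<lambda>q. fst (G q))) + integral (cbox a b) (py (\<lambda>q. snd (G q)))"
    unfolding div2_def[abs_def] using int by (rule integral_add)
  also have "\<dots> = 0"
    using assms by (simp add: integral_px_eq_0 integral_py_eq_0)
  finally show ?thesis .
qed

section \<open>Smooth steps and bumps\<close>

lemma has_real_derivative_quadratic_contact:
  fixes f :: "real \<Rightarrow> real"
  assumes "\<And>t. \<bar>f t - f x - D * (t - x)\<bar> \<le> C * (t - x)\<^sup>2"
  shows "(f has_real_derivative D) (at x)"
  unfolding has_field_derivative_def has_derivative_at_alt
proof (intro conjI allI impI)
  have "C \<ge> 0"
    using assms[of "x + 1"] by simp
  fix e :: real assume "e > 0"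
  show "\<exists>d>0. \<forall>y. norm (y - x) < d \<longrightarrow> norm (f y - f x - D * (y - x)) \<le> e * norm (y - x)"
  proof (intro exI[of _ "e / (C + 1)"] conjI allI impI)
    show "e / (C + 1) > 0"
      using \<open>e > 0\<close> \<open>C \<ge> 0\<close> by simp
    fix y assume "norm (y - x) < e / (C + 1)"
    then have "\<bar>y - x\<bar> * (C + 1) < e"
      using \<open>C \<ge> 0\<close> by (simp add: pos_less_divide_eq)
    then have "C * \<bar>y - x\<bar> \<le> e"
      by (simp add: algebra_simps)
    then have "C * \<bar>y - x\<bar> * \<bar>y - x\<bar> \<le> e * \<bar>y - x\<bar>"
      by (simp add: mult_right_mono)
    then show "norm (f y - f x - D * (y - x)) \<le> e * norm (y - x)"
      using assms[of y] by (simp add: power2_eq_square abs_mult_self_eq mult.assoc)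
  qed
qed (simp add: bounded_linear_mult_right)

definition smoothstep :: "real \<Rightarrow> real" where
  "smoothstep s = (if s \<le> 0 then 0 else if s \<ge> 1 then 1 else 3 * s\<^sup>2 - 2 * s ^ 3)"

definition smoothstep' :: "real \<Rightarrow> real" where
  "smoothstep' s = max 0 (6 * s * (1 - s))"

lemma smoothstep_eq_0: "s \<le> 0 \<Longrightarrow> smoothstep s = 0"
  by (simp add: smoothstep_def)

lemma smoothstep_eq_1: "s \<ge> 1 \<Longrightarrow> smoothstep s = 1"
  by (simp add: smoothstep_def)

lemma smoothstep_reflect: "smoothstep (1 - s) = 1 - smoothstep s"
  by (simp add: smoothstep_def power2_eq_square power3_eq_cube algebra_simps)

lemma smoothstep_bounds: "0 \<le> smoothstep s" "smoothstep s \<le> 1"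
proof -
  have "0 \<le> s\<^sup>2 * (3 - 2 * s)" "0 \<le> (1 - s)\<^sup>2 * (1 + 2 * s)" if "0 < s" "s < 1"
    using that by simp_all
  then show "0 \<le> smoothstep s" "smoothstep s \<le> 1"
    by (auto simp: smoothstep_def power2_eq_square power3_eq_cube algebra_simps)
qed

lemma smoothstep'_eq_0: "s \<le> 0 \<or> 1 \<le> s \<Longrightarrow> smoothstep' s = 0"
  by (auto simp: smoothstep'_def mult_nonneg_nonpos mult_nonpos_nonneg)

lemma smoothstep'_bounds: "0 \<le> smoothstep' s" "smoothstep' s \<le> 3 / 2"
proof -
  have "6 * s * (1 - s) \<le> 3 / 2"
    using zero_le_power2[of "s - 1 / 2"] by (simp add: power2_eq_square algebra_simps)
  then show "0 \<le> smoothstep' s" "smoothstep' s \<le> 3 / 2"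
    by (simp_all add: smoothstep'_def)
qed

lemma continuous_on_smoothstep': "continuous_on A smoothstep'"
  unfolding smoothstep'_def by (intro continuous_intros)

lemma smoothstep_has_real_derivative: "(smoothstep has_real_derivative smoothstep' s) (at s)"
proof -
  have at0: "(smoothstep has_real_derivative 0) (at 0)"
  proof (rule has_real_derivative_quadratic_contact[where C=3])
    show "\<bar>smoothstep t - smoothstep 0 - 0 * (t - 0)\<bar> \<le> 3 * (t - 0)\<^sup>2" for t
    proof (cases "t \<ge> 1")
      case True
      then have "1 \<le> t\<^sup>2"
        by (simp add: one_le_power)
      then show ?thesis
        using smoothstep_bounds[of t] by (simp add: smoothstep_eq_0)
    next
      case False
      have "0 \<le> t ^ 3" if "0 < t"
        using that by simp
      then show ?thesis
        using False smoothstep_bounds[of t] by (auto simp: smoothstep_def abs_le_iff)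
    qed
  qed
  consider "s < 0" | "s = 0" | "0 < s \<and> s < 1" | "s = 1" | "1 < s"
    by linarith
  then show ?thesis
  proof cases
    case 1
    have "(smoothstep has_real_derivative 0) (at s)"
      by (rule has_field_derivative_transform_within_open[OF DERIV_const[of 0], where S="{..<0}"])
        (use 1 in \<open>auto simp: smoothstep_def\<close>)
    then show ?thesis
      using 1 by (simp add: smoothstep'_eq_0)
  next
    case 2
    then show ?thesis
      using at0 by (simp add: smoothstep'_eq_0)
  next
    case 3
    have "0 \<le> 6 * s * (1 - s)"
      using 3 by simp
    then have "3 * (2 * s) - 2 * (3 * s\<^sup>2) = smoothstep' s"
      by (simp add: smoothstep'_def power2_eq_square algebra_simps)
    moreover have "((\<lambda>s. 3 * s\<^sup>2 - 2 * s ^ 3) has_real_derivative 3 * (2 * s) - 2 * (3 * s\<^sup>2)) (at s)"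
      by (intro derivative_eq_intros) auto
    ultimately have "((\<lambda>s. 3 * s\<^sup>2 - 2 * s ^ 3) has_real_derivative smoothstep' s) (at s)"
      by simp
    then show ?thesis
      by (rule has_field_derivative_transform_within_open[where S="{0<..<1}"])
        (use 3 in \<open>auto simp: smoothstep_def\<close>)
  next
    case 4
    have "((\<lambda>t. 1 - t) has_real_derivative - 1) (at 1)"
      by (intro derivative_eq_intros) auto
    with at0 have "((\<lambda>t. smoothstep (1 - t)) has_real_derivative 0 * - 1) (at 1)"
      using DERIV_chain2[of smoothstep 0 "\<lambda>t. 1 - t" 1] by simp
    then have "((\<lambda>t. 1 - smoothstep (1 - t)) has_real_derivative 0) (at 1)"
      by (intro derivative_eq_intros) auto
    then show ?thesis
      using 4 by (simp add: smoothstep_reflect smoothstep'_eq_0)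
  next
    case 5
    have "(smoothstep has_real_derivative 0) (at s)"
      by (rule has_field_derivative_transform_within_open[OF DERIV_const[of 1], where S="{1<..}"])
        (use 5 in \<open>auto simp: smoothstep_def\<close>)
    then show ?thesis
      using 5 by (simp add: smoothstep'_eq_0)
  qed
qed

lemma continuous_on_smoothstep: "continuous_on A smoothstep"
  by (meson smoothstep_has_real_derivative DERIV_continuous continuous_at_imp_continuous_on)

lemma smoothstep_affine_has_real_derivative:
  "((\<lambda>t. smoothstep (a * t + b)) has_real_derivative smoothstep' (a * t + b) * a) (at t)"
  by (rule DERIV_chain2[OF smoothstep_has_real_derivative]) (auto intro!: derivative_eq_intros)

definition bump :: "real \<Rightarrow> real" where
  "bump t = smoothstep (2 - t) * smoothstep (2 + t)"

definition bump' :: "real \<Rightarrow> real" where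
  "bump' t = smoothstep (2 - t) * smoothstep' (2 + t) - smoothstep' (2 - t) * smoothstep (2 + t)"

lemma bump_has_real_derivative: "(bump has_real_derivative bump' t) (at t)"
proof -
  have d1: "((\<lambda>t. smoothstep (2 - t)) has_real_derivative smoothstep' (2 - t) * - 1) (at t)"
    by (rule DERIV_chain2[OF smoothstep_has_real_derivative]) (auto intro!: derivative_eq_intros)
  have d2: "((\<lambda>t. smoothstep (2 + t)) has_real_derivative smoothstep' (2 + t) * 1) (at t)"
    by (rule DERIV_chain2[OF smoothstep_has_real_derivative]) (auto intro!: derivative_eq_intros)
  from DERIV_mult[OF d1 d2] show ?thesis
    unfolding bump_def[abs_def] bump'_def by (simp add: algebra_simps)
qed

lemma continuous_on_bump': "continuous_on A bump'"
  unfolding bump'_def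
  by (intro continuous_intros continuous_on_compose2[OF continuous_on_smoothstep[of UNIV]]
      continuous_on_compose2[OF continuous_on_smoothstep'[of UNIV]]) auto

lemma bump_bounds: "0 \<le> bump t" "bump t \<le> 1"
  using smoothstep_bounds[of "2 - t"] smoothstep_bounds[of "2 + t"]
  by (auto simp: bump_def mult_le_one)

lemma abs_bump'_le: "\<bar>bump' t\<bar> \<le> 3"
proof -
  have "\<bar>bump' t\<bar> \<le> smoothstep (2 - t) * smoothstep' (2 + t) + smoothstep' (2 - t) * smoothstep (2 + t)"
    unfolding bump'_def
    using smoothstep_bounds[of "2 - t"] smoothstep_bounds[of "2 + t"]
      smoothstep'_bounds[of "2 - t"] smoothstep'_bounds[of "2 + t"]
    by (simp add: abs_le_iff)
  also have "\<dots> \<le> 1 * (3 / 2) + 3 / 2 * 1"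
    using smoothstep_bounds[of "2 - t"] smoothstep_bounds[of "2 + t"]
      smoothstep'_bounds[of "2 - t"] smoothstep'_bounds[of "2 + t"]
    by (intro add_mono mult_mono) auto
  finally show ?thesis
    by simp
qed

lemma bump_eq_0: "2 \<le> \<bar>t\<bar> \<Longrightarrow> bump t = 0 \<and> bump' t = 0"
  by (auto simp: bump_def bump'_def smoothstep_eq_0 smoothstep'_eq_0 abs_if split: if_splits)

lemma bump_eq_1: "\<bar>t\<bar> \<le> 1 \<Longrightarrow> bump t = 1"
  by (simp add: bump_def smoothstep_eq_1)

definition square :: "real * real \<Rightarrow> real \<Rightarrow> (real * real) set" where
  "square c r = cbox (c - (r, r)) (c + (r, r))"

lemma content_square: "r \<ge> 0 \<Longrightarrow> measure lborel (square c r) = 4 * r\<^sup>2"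
  by (cases c) (simp add: square_def content_Pair power2_eq_square)

lemma mem_square: "q \<in> square c r \<longleftrightarrow> \<bar>fst q - fst c\<bar> \<le> r \<and> \<bar>snd q - snd c\<bar> \<le> r"
  by (cases q; cases c) (auto simp: square_def mem_box Basis_prod_def abs_le_iff)

lemma ball_subset_square: "ball c r \<subseteq> square c r"
proof
  fix q assume "q \<in> ball c r"
  then have "dist (fst q) (fst c) < r" "dist (snd q) (snd c) < r"
    using dist_fst_le[of q c] dist_snd_le[of q c] by (auto simp: dist_commute)
  then show "q \<in> square c r"
    by (simp add: mem_square dist_real_def)
qed

lemma square_subset_cball: "square c r \<subseteq> cball c (2 * r)"
proof
  fix q assume "q \<in> square c r"
  moreover have "dist c q \<le> \<bar>fst q - fst c\<bar> + \<bar>snd q - snd c\<bar>"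
    using sqrt_sum_squares_le_sum_abs[of "fst q - fst c" "snd q - snd c"]
    by (cases q; cases c) (simp add: dist_Pair_Pair dist_real_def power2_commute)
  ultimately show "q \<in> cball c (2 * r)"
    by (simp add: mem_square)
qed

lemma integral_indicator_cbox_le:
  fixes a b u v :: "'a::euclidean_space"
  shows "(indicator (cbox u v) :: 'a \<Rightarrow> real) integrable_on cbox a b"
    and "integral (cbox a b) (indicator (cbox u v) :: 'a \<Rightarrow> real) \<le> measure lborel (cbox u v)"
proof -
  obtain u' v' where uv: "cbox u v \<inter> cbox a b = cbox u' v'"
    unfolding Int_interval by auto
  have eq: "(indicator (cbox u v) :: 'a \<Rightarrow> real) = (\<lambda>x. if x \<in> cbox u v then 1 else 0)"
    by (auto simp: indicator_def)
  show "(indicator (cbox u v) :: 'a \<Rightarrow> real) integrable_on cbox a b"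
    unfolding eq integrable_restrict_Int uv by (rule integrable_const)
  have "integral (cbox a b) (indicator (cbox u v) :: 'a \<Rightarrow> real) = measure lborel (cbox u' v')"
    unfolding eq integral_restrict_Int uv by simp
  also have "\<dots> \<le> measure lborel (cbox u v)"
    by (rule content_subset) (use uv in blast)
  finally show "integral (cbox a b) (indicator (cbox u v) :: 'a \<Rightarrow> real) \<le> measure lborel (cbox u v)" .
qed

lemma integral_indicator_cbox_subset:
  fixes a b u v :: "'a::euclidean_space"
  assumes "cbox u v \<subseteq> cbox a b"
  shows "integral (cbox a b) (indicator (cbox u v) :: 'a \<Rightarrow> real) = measure lborel (cbox u v)"
proof -
  have "(indicator (cbox u v) :: 'a \<Rightarrow> real) = (\<lambda>x. if x \<in> cbox u v then 1 else 0)"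
    by (auto simp: indicator_def)
  moreover have "cbox u v \<inter> cbox a b = cbox u v"
    using assms by blast
  ultimately show ?thesis
    by (simp add: integral_restrict_Int)
qed

lemma integral_indicator_square_le:
  "r \<ge> 0 \<Longrightarrow> integral (cbox a b) (indicator (square c r) :: real * real \<Rightarrow> real) \<le> 4 * r\<^sup>2"
  using integral_indicator_cbox_le(2)[of a b "c - (r, r)" "c + (r, r)"] content_square[of r c]
  by (simp add: square_def)

definition square_bump :: "real * real \<Rightarrow> real \<Rightarrow> real * real \<Rightarrow> real" where
  "square_bump c r q = bump ((fst q - fst c) / r) * bump ((snd q - snd c) / r)"

lemma square_bump_has_derivative:
  assumes "r \<noteq> 0"
  shows "(square_bump c r has_derivative (\<lambda>e.
     bump' ((fst q - fst c) / r) * bump ((snd q - snd c) / r) * fst e / r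
     + bump ((fst q - fst c) / r) * bump' ((snd q - snd c) / r) * snd e / r)) (at q)"
proof -
  have "((\<lambda>q. (fst q - fst c) / r) has_derivative (\<lambda>e. fst e / r)) (at q)"
    "((\<lambda>q. (snd q - snd c) / r) has_derivative (\<lambda>e. snd e / r)) (at q)"
    using assms by (auto intro!: derivative_eq_intros simp: diff_divide_distrib)
  from has_derivative_mult[OF DERIV_compose_FDERIV[OF bump_has_real_derivative this(1)]
      DERIV_compose_FDERIV[OF bump_has_real_derivative this(2)]]
  show ?thesis
    unfolding square_bump_def[abs_def] by (rule has_derivative_eq_rhs) (auto simp: fun_eq_iff algebra_simps)
qed

lemma grad_square_bump:
  "r \<noteq> 0 \<Longrightarrow> grad (square_bump c r) q = (bump' ((fst q - fst c) / r) * bump ((snd q - snd c) / r) / r,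
     bump ((fst q - fst c) / r) * bump' ((snd q - snd c) / r) / r)"
  by (simp add: grad_has_derivative[OF square_bump_has_derivative])

lemma C1_on_square_bump:
  assumes "r \<noteq> 0"
  shows "C1_on A (square_bump c r)"
  unfolding square_bump_def[abs_def]
  using assms
  by (intro C1_on_mult C1_on_compose[where k=bump, OF _ bump_has_real_derivative continuous_on_bump']
      C1_on_divide C1_on_diff C1_on_fst C1_on_snd C1_on_const) auto

lemma square_bump_bounds: "0 \<le> square_bump c r q" "square_bump c r q \<le> 1"
  using bump_bounds by (auto simp: square_bump_def intro: mult_le_one)

lemma square_bump_eq_1:
  assumes "r > 0" "q \<in> square c r"
  shows "square_bump c r q = 1"
  using assms by (simp add: square_bump_def bump_eq_1 mem_square abs_divide)

lemma square_bump_eq_0: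
  assumes "r > 0" "q \<notin> square c (2 * r)"
  shows "square_bump c r q = 0" "grad (square_bump c r) q = 0"
proof -
  define X Y where "X = (fst q - fst c) / r" and "Y = (snd q - snd c) / r"
  have "2 \<le> \<bar>X\<bar> \<or> 2 \<le> \<bar>Y\<bar>"
    using assms by (auto simp: X_def Y_def mem_square abs_divide le_divide_eq)
  then have "bump X = 0 \<and> bump' X = 0 \<or> bump Y = 0 \<and> bump' Y = 0"
    using bump_eq_0 by blast
  then show "square_bump c r q = 0" "grad (square_bump c r) q = 0"
    using assms by (auto simp: square_bump_def grad_square_bump X_def[symmetric] Y_def[symmetric] zero_prod_def)
qed

lemma norm_grad_square_bump_le:
  assumes "r > 0"
  shows "norm (grad (square_bump c r) q) \<le> 6 / r * indicator (square c (2 * r)) q"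
proof (cases "q \<in> square c (2 * r)")
  case True
  have factor: "\<bar>a * b / r\<bar> \<le> 3 / r" if "\<bar>a\<bar> \<le> 3" "\<bar>b\<bar> \<le> 1" for a b
  proof -
    have "\<bar>a\<bar> * \<bar>b\<bar> \<le> 3 * 1"
      using that by (intro mult_mono) auto
    then show ?thesis
      using assms by (simp add: abs_mult divide_right_mono)
  qed
  define X Y where "X = (fst q - fst c) / r" and "Y = (snd q - snd c) / r"
  have grad_eq: "grad (square_bump c r) q = (bump' X * bump Y / r, bump' Y * bump X / r)"
    using assms by (simp add: grad_square_bump X_def Y_def mult.commute)
  have "norm (grad (square_bump c r) q) \<le> \<bar>bump' X * bump Y / r\<bar> + \<bar>bump' Y * bump X / r\<bar>"
    unfolding grad_eq norm_Pair real_norm_def power2_abs by (rule sqrt_sum_squares_le_sum_abs)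
  also have "\<dots> \<le> 3 / r + 3 / r"
    using bump_bounds abs_bump'_le by (intro add_mono factor) auto
  finally show ?thesis
    using True by simp
qed (use assms square_bump_eq_0 in simp)

section \<open>Cutting off a compact set of vanishing length\<close>

lemma hausdorff1_null_ball_cover:
  assumes "hausdorff1 K = 0" "compact K" "s > 0"
  obtains F :: "nat set" and r :: "nat \<Rightarrow> real" and c :: "nat \<Rightarrow> real * real"
  where "finite F" "\<And>n. n \<in> F \<Longrightarrow> r n > 0" "(\<Sum>n\<in>F. r n) \<le> s"
    "K \<subseteq> (\<Union>n\<in>F. ball (c n) (r n))"
proof -
  have "hausdorff1_delta 1 K \<le> hausdorff1 K"
    unfolding hausdorff1_def by (rule SUP_upper) simp
  then have "hausdorff1_delta 1 K < ennreal (s / 2)"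
    using assms by simp
  then obtain C where C: "K \<subseteq> (\<Union>n. C n)" "\<And>n. bounded (C n)"
    and sum_diam: "(\<Sum>n. ennreal (diameter (C n))) < ennreal (s / 2)"
    unfolding hausdorff1_delta_def INF_less_iff by auto
  define d where "d n = diameter (C n)" for n
  have d_nonneg: "0 \<le> d n" for n
    unfolding d_def using C(2) by (rule diameter_ge_0)
  have partial_sums: "(\<Sum>n<N. d n) < s / 2" for N
  proof -
    have "ennreal (\<Sum>n<N. d n) = (\<Sum>n<N. ennreal (d n))"
      using d_nonneg by simp
    also have "\<dots> \<le> (\<Sum>n. ennreal (d n))"
      by (intro sum_le_suminf summableI) auto
    also have "\<dots> < ennreal (s / 2)"
      using sum_diam unfolding d_def .
    finally show ?thesis
      using d_nonneg by (simp add: ennreal_less_iff sum_nonneg)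
  qed
  \<comment> \<open>The geometric slack makes every radius positive while keeping the total below s.\<close>
  define r where "r n = d n + s / 4 * (1 / 2) ^ n" for n
  define c where "c n = (SOME x. x \<in> C n)" for n
  have r_pos: "r n > 0" for n
    unfolding r_def using d_nonneg[of n] assms(3) by (intro add_nonneg_pos) auto
  have cover: "K \<subseteq> (\<Union>n. ball (c n) (r n))"
  proof
    fix x assume "x \<in> K"
    then obtain n where x: "x \<in> C n"
      using C(1) by auto
    then have "c n \<in> C n"
      unfolding c_def by (metis someI_ex)
    then have "dist (c n) x \<le> d n"
      unfolding d_def using C(2) x by (blast intro: diameter_bounded_bound)
    also have "\<dots> < r n"
      unfolding r_def using assms(3) by simp
    finally show "x \<in> (\<Union>n. ball (c n) (r n))"
      by (auto simp: mem_ball)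
  qed
  obtain F where F: "F \<subseteq> UNIV" "finite F" "K \<subseteq> (\<Union>n\<in>F. ball (c n) (r n))"
    by (rule compactE_image[OF assms(2) open_ball cover])
  obtain N where "F \<subseteq> {..<N}"
    using F(2) finite_nat_iff_bounded by blast
  then have "(\<Sum>n\<in>F. r n) \<le> (\<Sum>n<N. r n)"
    using r_pos by (intro sum_mono2) (auto simp: less_imp_le)
  also have "\<dots> = (\<Sum>n<N. d n) + s / 4 * (\<Sum>n<N. (1 / 2 :: real) ^ n)"
    unfolding r_def by (simp add: sum.distrib sum_distrib_left)
  also have "\<dots> \<le> s / 2 + s / 4 * 2"
    using partial_sums assms(3) by (intro add_mono mult_left_mono) (auto simp: sum_gp_strict less_imp_le)
  finally have "(\<Sum>n\<in>F. r n) \<le> s"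
    by simp
  with that[OF F(2) r_pos _ F(3)] show thesis .
qed

lemma cutoff_near_hausdorff1_null:
  assumes "compact K" "hausdorff1 K = 0" "\<epsilon> > 0"
  obtains \<psi> :: "real * real \<Rightarrow> real" and U and E :: "real * real \<Rightarrow> real" where
    "C1_on UNIV \<psi>" "\<And>q. 0 \<le> \<psi> q" "\<And>q. \<psi> q \<le> 1"
    "open U" "K \<subseteq> U" "\<And>q. q \<in> U \<Longrightarrow> \<psi> q = 0"
    "\<And>q. 0 \<le> E q" "\<And>q. \<psi> q \<noteq> 1 \<Longrightarrow> 1 \<le> E q" "\<And>q. norm (grad \<psi> q) \<le> E q"
    "\<And>a b. E integrable_on cbox a b" "\<And>a b. integral (cbox a b) E \<le> \<epsilon>"
proof -
  have "min 1 (\<epsilon> / 112) > 0"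
    using assms(3) by simp
  then obtain F :: "nat set" and r c where F: "finite F" and r_pos: "\<And>n. n \<in> F \<Longrightarrow> r n > 0"
    and r_sum: "(\<Sum>n\<in>F. r n) \<le> min 1 (\<epsilon> / 112)" and cover: "K \<subseteq> (\<Union>n\<in>F. ball (c n) (r n))"
    by (rule hausdorff1_null_ball_cover[OF assms(2,1)]) blast
  have r_le_1: "r n \<le> 1" if "n \<in> F" for n
    using member_le_sum[OF that, of r] F r_pos r_sum by (auto simp: less_imp_le)
  define \<theta> where "\<theta> n = square_bump (c n) (r n)" for n
  define \<psi> where "\<psi> q = (\<Prod>n\<in>F. 1 - \<theta> n q)" for q
  define E where "E q = (\<Sum>n\<in>F. (1 + 6 / r n) * indicator (square (c n) (2 * r n)) q)" for q
  have E_term_nonneg: "0 \<le> (1 + 6 / r n) * indicator (square (c n) (2 * r n)) q" if "n \<in> F" for n q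
    using r_pos[OF that] by (intro mult_nonneg_nonneg) auto
  have E_term_integrable:
    "(\<lambda>q. (1 + 6 / r n) * indicator (square (c n) (2 * r n)) q) integrable_on cbox a b" for n a b
    using integrable_on_cmult_left[OF integral_indicator_cbox_le(1), of "1 + 6 / r n"]
    by (simp add: square_def)
  have C1_\<theta>: "C1_on A (\<theta> n)" if "n \<in> F" for n A
    unfolding \<theta>_def using r_pos[OF that] by (simp add: C1_on_square_bump)
  have C1_factor: "C1_on A (\<lambda>q. 1 - \<theta> n q)" if "n \<in> F" for n A
    using C1_\<theta>[OF that] by (intro C1_on_diff C1_on_const)
  have factor_bounds: "0 \<le> 1 - \<theta> n q" "1 - \<theta> n q \<le> 1" for n q
    using square_bump_bounds[of "c n" "r n" q] by (simp_all add: \<theta>_def)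
  then have abs_factor: "\<bar>1 - \<theta> n q\<bar> \<le> 1" for n q
    by (simp add: abs_le_iff)
  show thesis
  proof (rule that[of \<psi> "\<Union>n\<in>F. ball (c n) (r n)" E])
    show "C1_on UNIV \<psi>"
      unfolding \<psi>_def[abs_def] using F C1_factor by (rule C1_on_prod)
    show "0 \<le> \<psi> q" for q
      unfolding \<psi>_def by (intro prod_nonneg factor_bounds)
    show "\<psi> q \<le> 1" for q
      unfolding \<psi>_def by (intro prod_le_1 conjI factor_bounds)
    show "\<psi> q = 0" if q: "q \<in> (\<Union>n\<in>F. ball (c n) (r n))" for q
    proof -
      obtain n where n: "n \<in> F" "q \<in> square (c n) (r n)"
        using q ball_subset_square by blast
      then have "1 - \<theta> n q = 0"
        using r_pos by (simp add: \<theta>_def square_bump_eq_1)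
      then show ?thesis
        using F n(1) by (auto simp: \<psi>_def prod_zero_iff)
    qed
    show "0 \<le> E q" for q
      unfolding E_def using E_term_nonneg by (intro sum_nonneg)
    show "1 \<le> E q" if q: "\<psi> q \<noteq> 1" for q
    proof -
      obtain n where n: "n \<in> F" "\<theta> n q \<noteq> 0"
        using q unfolding \<psi>_def by (metis (no_types, lifting) diff_zero prod.neutral)
      then have "q \<in> square (c n) (2 * r n)"
        using r_pos square_bump_eq_0 unfolding \<theta>_def by blast
      then have "1 \<le> (1 + 6 / r n) * indicator (square (c n) (2 * r n)) q"
        using r_pos[OF n(1)] by simp
      also have "\<dots> \<le> E q"
        unfolding E_def using F n(1) E_term_nonneg by (intro member_le_sum) auto
      finally show ?thesis .
    qed
    show "norm (grad \<psi> q) \<le> E q" for q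
    proof -
      have "norm (grad \<psi> q) \<le> (\<Sum>n\<in>F. norm (grad (\<lambda>q. 1 - \<theta> n q) q))"
        unfolding \<psi>_def[abs_def] by (rule norm_grad_prod_le[where A=UNIV]) (use F C1_factor abs_factor in auto)
      also have "\<dots> = (\<Sum>n\<in>F. norm (grad (\<theta> n) q))"
      proof (rule sum.cong)
        fix n assume "n \<in> F"
        then have "grad (\<lambda>q. 1 - \<theta> n q) q = - grad (\<theta> n) q"
          using grad_diff[OF differentiable_const C1_on_differentiable[OF C1_\<theta> UNIV_I]] by (simp add: grad_const)
        then show "norm (grad (\<lambda>q. 1 - \<theta> n q) q) = norm (grad (\<theta> n) q)"
          by simp
      qed simp
      also have "\<dots> \<le> E q"
        unfolding E_def \<theta>_def using r_pos norm_grad_square_bump_le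
        by (intro sum_mono order.trans[OF norm_grad_square_bump_le]) (auto simp: algebra_simps)
      finally show ?thesis .
    qed
    show "E integrable_on cbox a b" for a b
      unfolding E_def[abs_def] using F E_term_integrable by (intro integrable_sum)
    show "integral (cbox a b) E \<le> \<epsilon>" for a b
    proof -
      have "integral (cbox a b) E
          = (\<Sum>n\<in>F. integral (cbox a b) (\<lambda>q. (1 + 6 / r n) * indicator (square (c n) (2 * r n)) q))"
        unfolding E_def[abs_def] by (rule integral_sum[OF F]) (use E_term_integrable in blast)
      also have "\<dots> = (\<Sum>n\<in>F. (1 + 6 / r n) * integral (cbox a b) (indicator (square (c n) (2 * r n))))"
        by (intro sum.cong refl integral_mult[symmetric]) (simp add: square_def integral_indicator_cbox_le)
      also have "\<dots> \<le> (\<Sum>n\<in>F. (1 + 6 / r n) * (4 * (2 * r n)\<^sup>2))"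
        using r_pos by (intro sum_mono mult_left_mono integral_indicator_square_le) (auto simp: less_imp_le)
      also have "\<dots> \<le> (\<Sum>n\<in>F. 112 * r n)"
      proof (rule sum_mono)
        fix n assume "n \<in> F"
        then have "(1 + 6 / r n) * (4 * (2 * r n)\<^sup>2) = 16 * r n * r n + 96 * r n" "r n * r n \<le> r n"
          using r_pos r_le_1 by (auto simp: field_simps power2_eq_square intro: mult_left_le_one_le)
        then show "(1 + 6 / r n) * (4 * (2 * r n)\<^sup>2) \<le> 112 * r n"
          by linarith
      qed
      also have "\<dots> \<le> \<epsilon>"
        using r_sum by (simp add: sum_distrib_left[symmetric])
      finally show ?thesis .
    qed
  qed (use cover in auto)
qed

definition cutoff_field ::
    "(real * real) set \<Rightarrow> (real * real \<Rightarrow> real) \<Rightarrow> (real * real \<Rightarrow> real * real) \<Rightarrow> real * real \<Rightarrow> real * real" where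
  "cutoff_field V \<psi> F q = (if q \<in> V then \<psi> q *\<^sub>R F q else 0)"

context
  fixes \<Omega> C U :: "(real * real) set" and \<psi> :: "real * real \<Rightarrow> real" and F :: "real * real \<Rightarrow> real * real"
  assumes open_\<Omega>: "open \<Omega>" and closed_C: "closed C"
    and F_C1: "C1_on (\<Omega> - C) (\<lambda>q. fst (F q))" "C1_on (\<Omega> - C) (\<lambda>q. snd (F q))"
    and F_boundary: "\<And>q. q \<in> frontier \<Omega> - C \<Longrightarrow> \<exists>T. open T \<and> q \<in> T \<and> (\<forall>y\<in>T \<inter> (\<Omega> - C). F y = 0)"
    and \<psi>_C1: "C1_on UNIV \<psi>"
    and \<psi>_U: "open U" "C \<subseteq> U" "\<And>q. q \<in> U \<Longrightarrow> \<psi> q = 0"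
begin

lemma cutoff_field_locally_zero:
  assumes "q \<notin> \<Omega> - C"
  obtains T where "open T" "q \<in> T" "\<And>y. y \<in> T \<Longrightarrow> cutoff_field (\<Omega> - C) \<psi> F y = 0"
proof -
  consider "q \<in> C" | "q \<notin> closure \<Omega>" | "q \<in> frontier \<Omega> - C"
    using assms open_\<Omega> by (auto simp: frontier_def interior_open)
  then show thesis
  proof cases
    case 1
    then show thesis
      using \<psi>_U by (intro that[of U]) (auto simp: cutoff_field_def)
  next
    case 2
    then show thesis
      using closure_subset by (intro that[of "- closure \<Omega>"]) (auto simp: cutoff_field_def)
  next
    case 3
    then obtain T where "open T" "q \<in> T" "\<forall>y\<in>T \<inter> (\<Omega> - C). F y = 0"
      using F_boundary by blast
    then show thesis
      by (intro that[of T]) (auto simp: cutoff_field_def)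
  qed
qed

lemma cutoff_field_C1:
  "C1_on UNIV (\<lambda>q. fst (cutoff_field (\<Omega> - C) \<psi> F q))" "C1_on UNIV (\<lambda>q. snd (cutoff_field (\<Omega> - C) \<psi> F q))"
proof -
  have C1: "C1_on (\<Omega> - C) (\<lambda>q. \<psi> q * fst (F q))" "C1_on (\<Omega> - C) (\<lambda>q. \<psi> q * snd (F q))"
    using C1_on_subset[OF \<psi>_C1] F_C1 by (auto intro: C1_on_mult)
  have vanish: "\<exists>T. open T \<and> q \<in> T \<and> (\<forall>y\<in>T \<inter> (\<Omega> - C). \<psi> y * fst (F y) = 0 \<and> \<psi> y * snd (F y) = 0)"
    if q: "q \<notin> \<Omega> - C" for q
  proof -
    obtain T where T: "open T" "q \<in> T" "\<And>y. y \<in> T \<Longrightarrow> cutoff_field (\<Omega> - C) \<psi> F y = 0"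
      using q by (rule cutoff_field_locally_zero) blast
    have "\<psi> y * fst (F y) = 0 \<and> \<psi> y * snd (F y) = 0" if "y \<in> T \<inter> (\<Omega> - C)" for y
      using T(3)[of y] that by (auto simp: cutoff_field_def)
    then show ?thesis
      using T(1,2) by blast
  qed
  have "C1_on UNIV (\<lambda>q. if q \<in> \<Omega> - C then \<psi> q * fst (F q) else 0)"
    by (rule C1_on_extend_by_zero[OF open_Diff[OF open_\<Omega> closed_C] C1(1)]) (use vanish in \<open>meson IntD2\<close>)
  moreover have "C1_on UNIV (\<lambda>q. if q \<in> \<Omega> - C then \<psi> q * snd (F q) else 0)"
    by (rule C1_on_extend_by_zero[OF open_Diff[OF open_\<Omega> closed_C] C1(2)]) (use vanish in \<open>meson IntD2\<close>)
  moreover have "(\<lambda>q. fst (cutoff_field (\<Omega> - C) \<psi> F q)) = (\<lambda>q. if q \<in> \<Omega> - C then \<psi> q * fst (F q) else 0)"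
    "(\<lambda>q. snd (cutoff_field (\<Omega> - C) \<psi> F q)) = (\<lambda>q. if q \<in> \<Omega> - C then \<psi> q * snd (F q) else 0)"
    by (simp_all add: cutoff_field_def fun_eq_iff)
  ultimately show "C1_on UNIV (\<lambda>q. fst (cutoff_field (\<Omega> - C) \<psi> F q))"
    "C1_on UNIV (\<lambda>q. snd (cutoff_field (\<Omega> - C) \<psi> F q))"
    by simp_all
qed

lemma div2_cutoff_field:
  "q \<in> \<Omega> - C \<Longrightarrow> div2 (cutoff_field (\<Omega> - C) \<psi> F) q = inner (grad \<psi> q) (F q) + \<psi> q * div2 F q"
  "q \<notin> \<Omega> - C \<Longrightarrow> div2 (cutoff_field (\<Omega> - C) \<psi> F) q = 0"
proof -
  assume q: "q \<in> \<Omega> - C"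
  have "div2 (cutoff_field (\<Omega> - C) \<psi> F) q = div2 (\<lambda>q. \<psi> q *\<^sub>R F q) q"
    using open_Diff[OF open_\<Omega> closed_C] q by (rule div2_cong_open) (simp add: cutoff_field_def)
  also have "\<dots> = inner (grad \<psi> q) (F q) + \<psi> q * div2 F q"
    using q \<psi>_C1 F_C1 by (intro div2_scaleR) (auto intro: C1_on_differentiable)
  finally show "div2 (cutoff_field (\<Omega> - C) \<psi> F) q = inner (grad \<psi> q) (F q) + \<psi> q * div2 F q" .
next
  assume "q \<notin> \<Omega> - C"
  then obtain T where "open T" "q \<in> T" "\<And>y. y \<in> T \<Longrightarrow> cutoff_field (\<Omega> - C) \<psi> F y = 0"
    by (rule cutoff_field_locally_zero) blast
  then have "div2 (cutoff_field (\<Omega> - C) \<psi> F) q = div2 (\<lambda>q. 0) q"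
    by (rule div2_cong_open)
  then show "div2 (cutoff_field (\<Omega> - C) \<psi> F) q = 0"
    by (simp add: div2_def px_def py_def)
qed

lemma integral_div2_cutoff_field:
  assumes "\<Omega> \<subseteq> box a b"
  shows "integral (cbox a b) (div2 (cutoff_field (\<Omega> - C) \<psi> F)) = 0"
  using cutoff_field_C1 assms by (intro integral_div2_eq_0) (auto simp: cutoff_field_def)

end

lemma div2_minorant_nonpos:
  fixes \<Omega> C :: "(real * real) set" and F :: "real * real \<Rightarrow> real * real" and \<Phi> :: "real * real \<Rightarrow> real"
  assumes \<Omega>: "open \<Omega>" "bounded \<Omega>" and C: "compact C" "hausdorff1 C = 0"
    and F_C1: "C1_on (\<Omega> - C) (\<lambda>q. fst (F q))" "C1_on (\<Omega> - C) (\<lambda>q. snd (F q))"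
    and F_bounded: "\<And>q. q \<in> \<Omega> - C \<Longrightarrow> norm (F q) \<le> M"
    and F_boundary: "\<And>q. q \<in> frontier \<Omega> - C \<Longrightarrow> \<exists>T. open T \<and> q \<in> T \<and> (\<forall>y\<in>T \<inter> (\<Omega> - C). F y = 0)"
    and \<Phi>_nonneg: "\<And>q. q \<in> \<Omega> - C \<Longrightarrow> 0 \<le> \<Phi> q"
    and \<Phi>_le_div2: "\<And>q. q \<in> \<Omega> - C \<Longrightarrow> \<Phi> q \<le> div2 F q"
    and p: "p \<in> \<Omega>" "isCont \<Phi> p"
  shows "\<Phi> p \<le> 0"
proof (rule ccontr)
  assume "\<not> \<Phi> p \<le> 0"
  define c where "c = \<Phi> p / 2"
  have c: "c > 0"
    using \<open>\<not> \<Phi> p \<le> 0\<close> by (simp add: c_def)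
  obtain \<delta> where \<delta>: "\<delta> > 0" "ball p \<delta> \<subseteq> \<Omega>" "\<And>q. q \<in> ball p \<delta> \<Longrightarrow> c < \<Phi> q"
  proof -
    obtain d where d: "d > 0" "\<And>q. dist q p < d \<Longrightarrow> dist (\<Phi> q) (\<Phi> p) < c"
      using p(2) c unfolding continuous_at_eps_delta by blast
    obtain e where e: "e > 0" "ball p e \<subseteq> \<Omega>"
      using \<Omega>(1) p(1) open_contains_ball by blast
    have "c < \<Phi> q" if "q \<in> ball p (min d e)" for q
    proof -
      have "\<bar>\<Phi> q - \<Phi> p\<bar> < c"
        using d(2)[of q] that by (simp add: dist_commute dist_real_def)
      then show ?thesis
        unfolding c_def by arith
    qed
    then show thesis
      using d(1) e by (intro that[of "min d e"]) auto
  qed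
  define B where "B = square p (\<delta> / 4)"
  have B_ball: "B \<subseteq> ball p \<delta>"
    using square_subset_cball[of p "\<delta> / 4"] \<delta>(1) by (auto simp: B_def)
  have B_pos: "measure lborel B > 0"
    using \<delta>(1) by (simp add: B_def content_square)
  obtain a where \<Omega>_box: "\<Omega> \<subseteq> box (-a) a"
    using bounded_subset_box_symmetric[OF \<Omega>(2)] by blast
  have B_box: "B \<subseteq> cbox (-a) a"
    using B_ball \<delta>(2) \<Omega>_box box_subset_cbox by blast
  have cB: "c * measure lborel B > 0"
    using c B_pos by simp
  have cM: "c + \<bar>M\<bar> > 0"
    using c by (simp add: add_pos_nonneg)
  define \<epsilon> where "\<epsilon> = c * measure lborel B / 2 / (c + \<bar>M\<bar>)"
  have "\<epsilon> > 0"
    using cB cM by (simp add: \<epsilon>_def)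
  then obtain \<psi> E U where \<psi>: "C1_on UNIV \<psi>" "\<And>q. 0 \<le> \<psi> q" "\<And>q. \<psi> q \<le> 1"
    and U: "open U" "C \<subseteq> U" "\<And>q. q \<in> U \<Longrightarrow> \<psi> q = 0"
    and E: "\<And>q. 0 \<le> E q" "\<And>q. \<psi> q \<noteq> 1 \<Longrightarrow> 1 \<le> E q" "\<And>q. norm (grad \<psi> q) \<le> E q"
      "\<And>a b. E integrable_on cbox a b" "\<And>a b. integral (cbox a b) E \<le> \<epsilon>"
    by (rule cutoff_near_hausdorff1_null[OF C]) blast
  note cutoff = \<Omega>(1) compact_imp_closed[OF C(1)] F_C1 F_boundary \<psi>(1) U
  define G where "G = cutoff_field (\<Omega> - C) \<psi> F"
  have lower: "c * indicator B q - (c + \<bar>M\<bar>) * E q \<le> div2 G q" for q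
  proof (cases "q \<in> \<Omega> - C")
    case True
    have "\<bar>inner (grad \<psi> q) (F q)\<bar> \<le> E q * \<bar>M\<bar>"
      using Cauchy_Schwarz_ineq2[of "grad \<psi> q" "F q"] F_bounded[OF True] E(1,3)[of q]
      by (smt (verit) mult_mono norm_ge_zero)
    moreover have "c * indicator B q - c * E q \<le> \<psi> q * \<Phi> q"
    proof (cases "\<psi> q = 1")
      case True
      have "0 \<le> c * E q"
        using c E(1)[of q] by simp
      moreover have "c < \<Phi> q" if "q \<in> B"
        using B_ball that \<delta>(3) by blast
      ultimately show ?thesis
        using True \<Phi>_nonneg[OF \<open>q \<in> \<Omega> - C\<close>] by (auto simp: indicator_def)
    next
      case False
      then have "c * indicator B q - c * E q \<le> 0"
        using E(2)[of q] c by (auto simp: indicator_def)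
      then show ?thesis
        using \<psi>(2)[of q] \<Phi>_nonneg[OF \<open>q \<in> \<Omega> - C\<close>] by (smt (verit) mult_nonneg_nonneg)
    qed
    moreover have "\<psi> q * \<Phi> q \<le> \<psi> q * div2 F q"
      using \<Phi>_le_div2[OF True] \<psi>(2) by (rule mult_left_mono)
    ultimately show ?thesis
      using div2_cutoff_field(1)[OF cutoff True] by (simp add: G_def algebra_simps)
  next
    case False
    have "c * indicator B q - (c + \<bar>M\<bar>) * E q \<le> 0"
    proof (cases "q \<in> B")
      case True
      then have "q \<in> C"
        using False B_ball \<delta>(2) by auto
      then have "\<psi> q = 0"
        using U(2,3) by blast
      then have "c * 1 \<le> c * E q" "0 \<le> \<bar>M\<bar> * E q"
        using E(1,2)[of q] c by (auto intro: mult_left_mono)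
      then show ?thesis
        using True by (simp add: algebra_simps)
    qed (use c E(1)[of q] in simp)
    then show ?thesis
      using div2_cutoff_field(2)[OF cutoff False] by (simp add: G_def)
  qed
  have div2_integrable: "(div2 G) integrable_on cbox (-a) a"
    using continuous_on_div2[OF cutoff_field_C1[OF cutoff]]
    by (auto simp: G_def intro: integrable_continuous continuous_on_subset)
  have B_integral: "integral (cbox (-a) a) (indicator B) = measure lborel B"
    "(indicator B :: real * real \<Rightarrow> real) integrable_on cbox (-a) a"
    using B_box integral_indicator_cbox_le(1) by (auto simp: B_def square_def integral_indicator_cbox_subset)
  have int_B: "(\<lambda>q. c * indicator B q) integrable_on cbox (-a) a"
    using integrable_on_cmult_left[OF B_integral(2), of c] by simp
  have int_E: "(\<lambda>q. (c + \<bar>M\<bar>) * E q) integrable_on cbox (-a) a"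
    using integrable_on_cmult_left[OF E(4), of "c + \<bar>M\<bar>"] by simp
  have "c * measure lborel B - (c + \<bar>M\<bar>) * integral (cbox (-a) a) E
      = integral (cbox (-a) a) (\<lambda>q. c * indicator B q - (c + \<bar>M\<bar>) * E q)"
    using B_integral(1) by (simp add: integral_diff[OF int_B int_E])
  also have "\<dots> \<le> integral (cbox (-a) a) (div2 G)"
    using integrable_diff[OF int_B int_E] div2_integrable lower by (rule integral_le)
  also have "\<dots> = 0"
    unfolding G_def using cutoff \<Omega>_box by (rule integral_div2_cutoff_field)
  finally have "c * measure lborel B - (c + \<bar>M\<bar>) * integral (cbox (-a) a) E \<le> 0" .
  moreover have "(c + \<bar>M\<bar>) * integral (cbox (-a) a) E \<le> (c + \<bar>M\<bar>) * \<epsilon>"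
    using E(5) c by (intro mult_left_mono) auto
  moreover have "(c + \<bar>M\<bar>) * \<epsilon> = c * measure lborel B / 2"
    unfolding \<epsilon>_def using cM by (metis less_irrefl nonzero_mult_div_cancel_left times_divide_eq_right)
  ultimately show False
    using cB by linarith
qed

section \<open>The normal field\<close>

lemma inner_diff_sgn:
  fixes a b :: "'a::real_inner"
  assumes "a \<noteq> 0" "b \<noteq> 0"
  shows "inner (a - b) (sgn a - sgn b) = (norm a + norm b) / 2 * (norm (sgn a - sgn b))\<^sup>2"
proof -
  define k where "k = inner (sgn a) (sgn b)"
  have a: "inner a x = norm a * inner (sgn a) x" and b: "inner b x = norm b * inner (sgn b) x" for x
    using assms by (simp_all add: sgn_div_norm)
  have unit: "inner (sgn a) (sgn a) = 1" "inner (sgn b) (sgn b) = 1"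
    using assms by (simp_all flip: power2_norm_eq_inner add: norm_sgn)
  have "inner (a - b) (sgn a - sgn b) = (norm a + norm b) * (1 - k)"
    by (simp add: inner_diff_left inner_diff_right a b unit k_def inner_commute algebra_simps)
  moreover have "(norm (sgn a - sgn b))\<^sup>2 = 2 * (1 - k)"
    by (simp add: power2_norm_eq_inner inner_diff_left inner_diff_right unit k_def inner_commute)
  ultimately show ?thesis
    by simp
qed

definition shifted_grad :: "(real * real \<Rightarrow> real) \<Rightarrow> real * real \<Rightarrow> real * real" where
  "shifted_grad w p = (px w p - snd p, py w p + fst p)"

lemma Nfield_eq_sgn: "Nfield w p = sgn (shifted_grad w p)"
  by (simp add: Nfield_def shifted_grad_def Let_def sgn_div_norm norm_Pair divide_inverse mult.commute)

lemma shifted_grad_diff: "shifted_grad u p - shifted_grad v p = grad u p - grad v p"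
  by (simp add: shifted_grad_def grad_def)

lemma mem_sing_set_iff:
  "p \<in> sing_set \<Omega> S1 u \<longleftrightarrow> p \<in> \<Omega> - S1 \<and> u differentiable (at p) \<and> shifted_grad u p = 0"
  by (auto simp: sing_set_def shifted_grad_def zero_prod_def)

lemma norm_Nfield_diff_le: "norm (Nfield u p - Nfield v p) \<le> 2"
proof -
  have "norm (Nfield u p - Nfield v p) \<le> norm (Nfield u p) + norm (Nfield v p)"
    by (rule norm_triangle_ineq4)
  also have "\<dots> \<le> 1 + 1"
    by (intro add_mono) (simp_all add: Nfield_eq_sgn norm_sgn)
  finally show ?thesis
    by simp
qed

lemma isCont_shifted_grad:
  assumes "px w differentiable (at p)" "py w differentiable (at p)"
  shows "isCont (shifted_grad w) p"
  unfolding shifted_grad_def[abs_def]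
  using assms[THEN differentiable_imp_continuous_within] by (intro continuous_intros)

lemma Nfield_C1_on:
  assumes "C1_on A (px w)" "C1_on A (py w)" "\<forall>p\<in>A. shifted_grad w p \<noteq> 0"
  shows "C1_on A (\<lambda>p. fst (Nfield w p))" "C1_on A (\<lambda>p. snd (Nfield w p))"
proof -
  define P Q where "P p = px w p - snd p" and "Q p = py w p + fst p" for p
  have C1: "C1_on A P" "C1_on A Q"
    unfolding P_def[abs_def] Q_def[abs_def] using assms(1,2)
    by (auto intro: C1_on_diff C1_on_add C1_on_fst C1_on_snd)
  have pos: "P p * P p + Q p * Q p > 0" if "p \<in> A" for p
    using assms(3) that unfolding shifted_grad_def P_def Q_def zero_prod_def
    by (simp add: sum_squares_gt_zero_iff)
  have C1_norm: "C1_on A (\<lambda>p. sqrt (P p * P p + Q p * Q p))"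
    using C1 pos by (intro C1_on_sqrt C1_on_add C1_on_mult)
  have nonzero: "sqrt (P p * P p + Q p * Q p) \<noteq> 0" if "p \<in> A" for p
    using real_sqrt_gt_zero[OF pos[OF that]] by linarith
  have "C1_on A (\<lambda>p. P p / sqrt (P p * P p + Q p * Q p))" "C1_on A (\<lambda>p. Q p / sqrt (P p * P p + Q p * Q p))"
    using C1_on_divide[OF C1(1) C1_norm nonzero] C1_on_divide[OF C1(2) C1_norm nonzero] by simp_all
  moreover have "fst (Nfield w p) = P p / sqrt (P p * P p + Q p * Q p)"
    "snd (Nfield w p) = Q p / sqrt (P p * P p + Q p * Q p)" for p
    by (simp_all add: Nfield_def Let_def P_def Q_def power2_eq_square)
  ultimately show "C1_on A (\<lambda>p. fst (Nfield w p))" "C1_on A (\<lambda>p. snd (Nfield w p))"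
    by simp_all
qed

lemma comparison_field_C1_div2:
  fixes g g' :: "real \<Rightarrow> real"
  assumes u: "C1_on A u" "C1_on A (px u)" "C1_on A (py u)"
    and v: "C1_on A v" "C1_on A (px v)" "C1_on A (py v)"
    and nonzero: "\<forall>p\<in>A. shifted_grad u p \<noteq> 0" "\<forall>p\<in>A. shifted_grad v p \<noteq> 0"
    and g: "\<And>t. (g has_real_derivative g' t) (at t)" "continuous_on UNIV g'"
  defines "F \<equiv> \<lambda>q. g (u q - v q) *\<^sub>R (Nfield u q - Nfield v q)"
  shows "C1_on A (\<lambda>q. fst (F q))" "C1_on A (\<lambda>q. snd (F q))"
    and "p \<in> A \<Longrightarrow> div2 F p = g' (u p - v p) * inner (shifted_grad u p - shifted_grad v p) (Nfield u p - Nfield v p)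
                           + g (u p - v p) * (div2 (Nfield u) p - div2 (Nfield v) p)"
proof -
  note Nu = Nfield_C1_on[OF u(2,3) nonzero(1)] and Nv = Nfield_C1_on[OF v(2,3) nonzero(2)]
  have C1_uv: "C1_on A (\<lambda>q. u q - v q)"
    using u(1) v(1) by (rule C1_on_diff)
  have C1_g: "C1_on A (\<lambda>q. g (u q - v q))"
    using C1_uv g(1) continuous_on_subset[OF g(2)] by (rule C1_on_compose) auto
  have C1_W: "C1_on A (\<lambda>q. fst (Nfield u q - Nfield v q))" "C1_on A (\<lambda>q. snd (Nfield u q - Nfield v q))"
    using C1_on_diff[OF Nu(1) Nv(1)] C1_on_diff[OF Nu(2) Nv(2)] by simp_all
  show "C1_on A (\<lambda>q. fst (F q))" "C1_on A (\<lambda>q. snd (F q))"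
    unfolding F_def using C1_on_mult[OF C1_g C1_W(1)] C1_on_mult[OF C1_g C1_W(2)] by simp_all
  assume "p \<in> A"
  then have "div2 F p = inner (grad (\<lambda>q. g (u q - v q)) p) (Nfield u p - Nfield v p)
      + g (u p - v p) * div2 (\<lambda>q. Nfield u q - Nfield v q) p"
    unfolding F_def using C1_g C1_W by (intro div2_scaleR) (auto intro: C1_on_differentiable)
  also have "grad (\<lambda>q. g (u q - v q)) p = g' (u p - v p) *\<^sub>R (shifted_grad u p - shifted_grad v p)"
    using \<open>p \<in> A\<close> u(1) v(1) C1_uv
    by (simp add: grad_compose[OF g(1)] grad_diff shifted_grad_diff C1_on_differentiable)
  also have "div2 (\<lambda>q. Nfield u q - Nfield v q) p = div2 (Nfield u) p - div2 (Nfield v) p"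
    using \<open>p \<in> A\<close> Nu Nv by (intro div2_diff) (auto intro: C1_on_differentiable)
  finally show "div2 F p = g' (u p - v p) * inner (shifted_grad u p - shifted_grad v p) (Nfield u p - Nfield v p)
      + g (u p - v p) * (div2 (Nfield u) p - div2 (Nfield v) p)"
    by simp
qed

section \<open>The comparison principle\<close>

lemma diff_less_near:
  fixes u v :: "real * real \<Rightarrow> real"
  assumes "continuous_on A u" "continuous_on A v" "q \<in> A" "u q \<le> v q" "\<epsilon> > 0"
  shows "\<exists>T. open T \<and> q \<in> T \<and> (\<forall>y\<in>T \<inter> A. u y - v y < \<epsilon>)"
proof -
  have "continuous (at q within A) (\<lambda>y. u y - v y)"
    using assms(1-3) by (intro continuous_intros) (auto simp: continuous_on_eq_continuous_within)
  then obtain d where "d > 0" "\<forall>y\<in>A. dist y q < d \<longrightarrow> dist (u y - v y) (u q - v q) < \<epsilon>"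
    using assms(5) unfolding continuous_within_eps_delta by blast
  then show ?thesis
    using assms(4) by (intro exI[of _ "ball q d"]) (auto simp: dist_real_def dist_commute)
qed

lemma Nfield_eq_if_greater_C1:
  fixes \<Omega> C :: "(real * real) set" and u v :: "real * real \<Rightarrow> real"
  assumes \<Omega>: "open \<Omega>" "bounded \<Omega>" and C: "compact C" "hausdorff1 C = 0"
    and u: "C1_on (\<Omega> - C) u" "C1_on (\<Omega> - C) (px u)" "C1_on (\<Omega> - C) (py u)"
    and v: "C1_on (\<Omega> - C) v" "C1_on (\<Omega> - C) (px v)" "C1_on (\<Omega> - C) (py v)"
    and nonzero: "\<forall>q\<in>\<Omega> - C. shifted_grad u q \<noteq> 0" "\<forall>q\<in>\<Omega> - C. shifted_grad v q \<noteq> 0"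
    and div2_le: "\<And>q. q \<in> \<Omega> - C \<Longrightarrow> div2 (Nfield v) q \<le> div2 (Nfield u) q"
    and boundary: "\<And>q \<epsilon>. q \<in> frontier \<Omega> - C \<Longrightarrow> \<epsilon> > 0 \<Longrightarrow>
      \<exists>T. open T \<and> q \<in> T \<and> (\<forall>y\<in>T \<inter> (\<Omega> - C). u y - v y < \<epsilon>)"
    and p: "p \<in> \<Omega>" "u p > v p" "isCont u p" "isCont v p" "isCont (shifted_grad u) p" "isCont (shifted_grad v) p"
      "shifted_grad u p \<noteq> 0" "shifted_grad v p \<noteq> 0"
  shows "Nfield u p = Nfield v p"
proof -
  define D where "D = u p - v p"
  have D: "D > 0"
    using p(2) by (simp add: D_def)
  \<comment> \<open>g vanishes where u - v \<le> D/2, so the field below vanishes near the boundary, and g' (D) > 0.\<close>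
  define g where "g t = smoothstep (1 / D * t + - 1 / 2)" for t
  define g' where "g' t = smoothstep' (1 / D * t + - 1 / 2) * (1 / D)" for t
  have g_deriv: "(g has_real_derivative g' t) (at t)" for t
    unfolding g_def[abs_def] g'_def by (rule smoothstep_affine_has_real_derivative)
  have g'_cont: "continuous_on A g'" for A
    unfolding g'_def[abs_def]
    by (intro continuous_intros continuous_on_compose2[OF continuous_on_smoothstep'[of UNIV]]) auto
  have g_bounds: "0 \<le> g t" "g t \<le> 1" "0 \<le> g' t" for t
    using smoothstep_bounds smoothstep'_bounds D by (auto simp: g_def g'_def)
  have g_vanishes: "g t = 0" if "t < D / 2" for t
    using that D by (auto simp: g_def intro!: smoothstep_eq_0)
  have g'_D: "g' D > 0"
    using D by (simp add: g'_def smoothstep'_def)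
  define F where "F q = g (u q - v q) *\<^sub>R (Nfield u q - Nfield v q)" for q
  define \<Phi> where "\<Phi> q = g' (u q - v q) * inner (shifted_grad u q - shifted_grad v q) (Nfield u q - Nfield v q)" for q
  have \<Phi>_eq: "\<Phi> q = g' (u q - v q) * ((norm (shifted_grad u q) + norm (shifted_grad v q)) / 2
      * (norm (Nfield u q - Nfield v q))\<^sup>2)" if "shifted_grad u q \<noteq> 0" "shifted_grad v q \<noteq> 0" for q
    using that by (simp add: \<Phi>_def Nfield_eq_sgn inner_diff_sgn)
  note field = comparison_field_C1_div2[OF u v nonzero g_deriv g'_cont, folded F_def]
  have "\<Phi> p \<le> 0"
  proof (rule div2_minorant_nonpos[OF \<Omega> C field(1,2)])
    show "norm (F q) \<le> 2" for q
    proof -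
      have "norm (F q) = \<bar>g (u q - v q)\<bar> * norm (Nfield u q - Nfield v q)"
        by (simp add: F_def)
      also have "\<dots> \<le> 1 * 2"
        using g_bounds norm_Nfield_diff_le by (intro mult_mono) auto
      finally show ?thesis
        by simp
    qed
    show "\<exists>T. open T \<and> q \<in> T \<and> (\<forall>y\<in>T \<inter> (\<Omega> - C). F y = 0)" if q: "q \<in> frontier \<Omega> - C" for q
    proof -
      obtain T where "open T" "q \<in> T" "\<forall>y\<in>T \<inter> (\<Omega> - C). u y - v y < D / 2"
        using boundary[OF q, of "D / 2"] D by auto
      then show ?thesis
        using g_vanishes by (auto simp: F_def)
    qed
    show "0 \<le> \<Phi> q" if "q \<in> \<Omega> - C" for q
      using nonzero that g_bounds by (simp add: \<Phi>_eq)
    show "\<Phi> q \<le> div2 F q" if "q \<in> \<Omega> - C" for q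
      using field(3)[OF that] div2_le[OF that] g_bounds by (simp add: \<Phi>_def mult_nonneg_nonneg)
    have "isCont g' (u p - v p)"
      using g'_cont[of UNIV] by (simp add: continuous_on_eq_continuous_at)
    then have "isCont (\<lambda>q. g' (u q - v q)) p"
      by (rule isCont_o2[where f="\<lambda>q. u q - v q", rotated]) (use p(3,4) in \<open>intro continuous_intros\<close>)
    then show "isCont \<Phi> p"
      unfolding \<Phi>_def[abs_def] Nfield_eq_sgn by (intro continuous_intros p(5-8))
  qed (use p(1) in auto)
  define \<kappa> where "\<kappa> = g' D * ((norm (shifted_grad u p) + norm (shifted_grad v p)) / 2)"
  have "\<kappa> > 0"
    using g'_D p(7) by (simp add: \<kappa>_def add_pos_nonneg)
  moreover have "\<kappa> * (norm (Nfield u p - Nfield v p))\<^sup>2 \<le> 0"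
    using \<open>\<Phi> p \<le> 0\<close> \<Phi>_eq[OF p(7,8)] by (simp add: \<kappa>_def D_def mult.assoc)
  ultimately have "(norm (Nfield u p - Nfield v p))\<^sup>2 \<le> 0"
    by (simp add: mult_le_0_iff)
  then show ?thesis
    by simp
qed

lemma Nfield_eq_if_greater:
  fixes \<Omega> S :: "(real * real) set" and u v :: "real * real \<Rightarrow> real"
  assumes open_\<Omega>: "open \<Omega>" and bounded_\<Omega>: "bounded \<Omega>" and "S \<subseteq> \<Omega>"
    and null: "hausdorff1 (closure S) = 0"
    and C2_u: "C2_on (\<Omega> - S) u" and C2_v: "C2_on (\<Omega> - S) v"
    and nonzero: "\<forall>q\<in>\<Omega> - S. shifted_grad u q \<noteq> 0 \<and> shifted_grad v q \<noteq> 0"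
    and cont_u: "continuous_on (closure \<Omega> - S) u" and cont_v: "continuous_on (closure \<Omega> - S) v"
    and boundary: "\<forall>q\<in>frontier \<Omega> - S. u q \<le> v q"
    and div2_le: "\<forall>q\<in>\<Omega> - S. div2 (Nfield v) q \<le> div2 (Nfield u) q"
    and p: "p \<in> \<Omega> - S" "u p > v p"
  shows "Nfield u p = Nfield v p"
proof -
  have compact: "compact (closure S)"
    using bounded_\<Omega> \<open>S \<subseteq> \<Omega>\<close> by (meson bounded_subset compact_closure)
  have regular: "\<Omega> - closure S \<subseteq> \<Omega> - S"
    using closure_subset by blast
  note u = C2_on_imp_C1_on[OF C2_u] and v = C2_on_imp_C1_on[OF C2_v]
  have near_boundary: "\<exists>T. open T \<and> q \<in> T \<and> (\<forall>y\<in>T \<inter> (\<Omega> - closure S). u y - v y < \<epsilon>)"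
    if "q \<in> frontier \<Omega> - closure S" "\<epsilon> > 0" for q \<epsilon>
  proof -
    have "q \<in> closure \<Omega> - S" "u q \<le> v q"
      using that boundary closure_subset by (auto simp: frontier_def)
    then obtain T where "open T" "q \<in> T" "\<forall>y\<in>T \<inter> (closure \<Omega> - S). u y - v y < \<epsilon>"
      using diff_less_near[OF cont_u cont_v] \<open>\<epsilon> > 0\<close> by blast
    then show ?thesis
      using closure_subset[of \<Omega>] closure_subset[of S] by blast
  qed
  have p_regular: "u differentiable (at p)" "v differentiable (at p)"
    "px u differentiable (at p)" "py u differentiable (at p)" "px v differentiable (at p)" "py v differentiable (at p)"
    using p C2_u C2_v by (auto simp: C2_on_def)
  show ?thesis
  proof (rule Nfield_eq_if_greater_C1[OF open_\<Omega> bounded_\<Omega> compact null])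
    show "C1_on (\<Omega> - closure S) u" "C1_on (\<Omega> - closure S) (px u)" "C1_on (\<Omega> - closure S) (py u)"
      "C1_on (\<Omega> - closure S) v" "C1_on (\<Omega> - closure S) (px v)" "C1_on (\<Omega> - closure S) (py v)"
      using u v regular by (auto intro: C1_on_subset)
    show "\<forall>q\<in>\<Omega> - closure S. shifted_grad u q \<noteq> 0" "\<forall>q\<in>\<Omega> - closure S. shifted_grad v q \<noteq> 0"
      using nonzero regular by blast+
    show "div2 (Nfield v) q \<le> div2 (Nfield u) q" if "q \<in> \<Omega> - closure S" for q
      using div2_le regular that by blast
    show "isCont u p" "isCont v p"
      using p_regular(1,2) by (simp_all add: differentiable_imp_continuous_within)
    show "isCont (shifted_grad u) p" "isCont (shifted_grad v) p"
      using p_regular(3-6) by (simp_all add: isCont_shifted_grad)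
    show "shifted_grad u p \<noteq> 0" "shifted_grad v p \<noteq> 0"
      using nonzero p(1) by blast+
  qed (use p near_boundary in auto)
qed

theorem theorem5p2:
  fixes \<Omega> S1 S2 :: "(real * real) set"
    and u v :: "real * real \<Rightarrow> real"
  assumes open_\<Omega>: "open \<Omega>" and "connected \<Omega>" and bounded_\<Omega>: "bounded \<Omega>"
    and S1: "S1 \<subseteq> \<Omega>" and S2: "S2 \<subseteq> \<Omega>"
    and cont_u: "continuous_on (closure \<Omega> - S1) u"
    and cont_v: "continuous_on (closure \<Omega> - S2) v"
    and S: "S = S1 \<union> S2 \<union> sing_set \<Omega> S1 u \<union> sing_set \<Omega> S2 v"
    and C2_u: "C2_on (\<Omega> - S) u" and C2_v: "C2_on (\<Omega> - S) v"
    and null: "hausdorff1 (closure S) = 0"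
    and div2_le: "\<forall>p \<in> \<Omega> - S. div2 (Nfield u) p \<ge> div2 (Nfield v) p"
    and boundary: "\<forall>p \<in> frontier \<Omega> - S. u p \<le> v p"
  shows "\<forall>p \<in> {q \<in> \<Omega>. u q - v q > 0} - S. Nfield u p = Nfield v p"
proof
  fix p assume p: "p \<in> {q \<in> \<Omega>. u q - v q > 0} - S"
  have "S \<subseteq> \<Omega>"
    using S1 S2 S by (auto simp: sing_set_def)
  have "shifted_grad u q \<noteq> 0 \<and> shifted_grad v q \<noteq> 0" if q: "q \<in> \<Omega> - S" for q
  proof -
    have "q \<in> \<Omega> - S1" "q \<notin> sing_set \<Omega> S1 u" "q \<in> \<Omega> - S2" "q \<notin> sing_set \<Omega> S2 v"
      using q S by blast+
    moreover have "u differentiable (at q)" "v differentiable (at q)"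
      using q C2_u C2_v by (simp_all add: C2_on_def)
    ultimately show ?thesis
      unfolding mem_sing_set_iff by blast
  qed
  moreover have "continuous_on (closure \<Omega> - S) u" "continuous_on (closure \<Omega> - S) v"
    using cont_u cont_v S by (auto intro: continuous_on_subset)
  ultimately show "Nfield u p = Nfield v p"
    using Nfield_eq_if_greater[OF open_\<Omega> bounded_\<Omega> \<open>S \<subseteq> \<Omega>\<close> null C2_u C2_v] div2_le boundary p
    by auto
qed

end
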